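(* Let $f_1,\dots,f_n:\mathbb{R}^d\to\mathbb{R}$ be smooth with $e^{-f_i}$ probability densities and $\int e^{-\beta f_i}dx<\infty$ for all $\beta>0$; let $w_1,\dots,w_n>0$, $\sum_iw_i=1$, $w_{\min}=\min_iw_i$, $f=-\ln\sum_iw_ie^{-f_i}$, and for $0<\beta\le1$ let $p_\beta=e^{-\beta f}/\int e^{-\beta f}$. Fix $\beta\in(0,1]$ and suppose $Z_\beta:=\int e^{-\beta f_1}dx=\cdots=\int e^{-\beta f_n}dx$ (e.g. gaussians of equal variance). Suppose each $\tilde p_{\beta,i}=e^{-\beta f_i}/Z_\beta$ satisfies a Poincaré inequality with constant $C_\beta$. Then $p_\beta$ satisfies a Poincaré inequality with constant $\frac{2C_\beta}{w_{\min}}$ on sets of measure $\le\frac{w_{\min}^2}{2}$.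
   Context: For a probability density $p$ on $\mathbb{R}^d$, $\mathcal E_p(g)=\int\|\nabla g\|^2p\,dx$, $\operatorname{Var}_p(g)=\int g^2p-(\int gp)^2$, with $g$ locally Lipschitz and $\int g^2 p<\infty$. $p$ satisfies a Poincaré inequality with constant $C$ if $\mathcal E_p(g)\ge\frac1C\operatorname{Var}_p(g)$ for all such $g$; it satisfies one on sets of measure $\le m$ if this holds for all such $g$ with $p(\operatorname{Supp}(g))\le m$. *)

theory Defs
  imports "HOL-Analysis.Analysis"
begin

coinductive smooth_fun :: "('a::euclidean_space \<Rightarrow> real) \<Rightarrow> bool" where
  "(\<forall>x. f differentiable (at x)) \<Longrightarrow>
   (\<forall>b\<in>Basis. smooth_fun (\<lambda>x. frechet_derivative f (at x) b)) \<Longrightarrow> smooth_fun f"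

definition loc_lipschitz :: "('a::euclidean_space \<Rightarrow> real) \<Rightarrow> bool" where
  "loc_lipschitz g \<longleftrightarrow>
     (\<forall>x. \<exists>e>0. \<exists>L. \<forall>y\<in>ball x e. \<forall>z\<in>ball x e. \<bar>g y - g z\<bar> \<le> L * dist y z)"

text \<open>Gradient: the vector representing the Frechet derivative where it exists
  (for locally Lipschitz g this is almost everywhere, by Rademacher).\<close>
definition grad :: "('a::euclidean_space \<Rightarrow> real) \<Rightarrow> 'a \<Rightarrow> 'a" where
  "grad g x = (SOME v. (g has_derivative (\<lambda>h. v \<bullet> h)) (at x))"

definition dirichlet :: "('a::euclidean_space \<Rightarrow> real) \<Rightarrow> ('a \<Rightarrow> real) \<Rightarrow> ennreal" where
  "dirichlet p g = (\<integral>\<^sup>+ x. ennreal ((norm (grad g x))\<^sup>2 * p x) \<partial>lebesgue)"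

definition variance_p :: "('a::euclidean_space \<Rightarrow> real) \<Rightarrow> ('a \<Rightarrow> real) \<Rightarrow> real" where
  "variance_p p g = (\<integral>x. (g x)\<^sup>2 * p x \<partial>lebesgue) - (\<integral>x. g x * p x \<partial>lebesgue)\<^sup>2"

definition admissible :: "('a::euclidean_space \<Rightarrow> real) \<Rightarrow> ('a \<Rightarrow> real) \<Rightarrow> bool" where
  "admissible p g \<longleftrightarrow> loc_lipschitz g \<and> integrable lebesgue (\<lambda>x. (g x)\<^sup>2 * p x)"

definition poincare :: "('a::euclidean_space \<Rightarrow> real) \<Rightarrow> real \<Rightarrow> bool" where
  "poincare p C \<longleftrightarrow>
     (\<forall>g. admissible p g \<longrightarrow> ennreal (variance_p p g / C) \<le> dirichlet p g)"

definition supp :: "('a::euclidean_space \<Rightarrow> real) \<Rightarrow> 'a set" where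
  "supp g = closure {x. g x \<noteq> 0}"

definition prob_dens :: "('a::euclidean_space \<Rightarrow> real) \<Rightarrow> 'a set \<Rightarrow> ennreal" where
  "prob_dens p A = (\<integral>\<^sup>+ x\<in>A. ennreal (p x) \<partial>lebesgue)"

definition poincare_small_sets :: "('a::euclidean_space \<Rightarrow> real) \<Rightarrow> real \<Rightarrow> real \<Rightarrow> bool" where
  "poincare_small_sets p C m \<longleftrightarrow>
     (\<forall>g. admissible p g \<longrightarrow> prob_dens p (supp g) \<le> ennreal m \<longrightarrow>
          ennreal (variance_p p g / C) \<le> dirichlet p g)"

end

theory Submission
  imports Defs
begin

text \<open>Write \<open>q i = exp (- \<beta> * f i)\<close> and \<open>p i = q i / Z\<close>. Concavity of \<open>t powr \<beta>\<close>, together with the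
  bound of a weighted mean by its largest term, gives
  \<open>\<Sum> w i * q i \<le> exp (- \<beta> * f) \<le> (\<Sum> w i * q i) / wmin\<close>. Hence \<open>p\<^sub>\<beta>\<close> is squeezed between the
  mixture \<open>\<Sum> c i * p i\<close>, where \<open>c i = w i * Z / (\<integral> exp (- \<beta> * f)) \<ge> wmin\<^sup>2\<close>, and \<open>1 / wmin\<close> times it.
  If the support of \<open>g\<close> has \<open>p\<^sub>\<beta>\<close>-mass at most \<open>wmin\<^sup>2 / 2\<close>, it has \<open>p i\<close>-mass at most \<open>1 / 2\<close>,
  and Cauchy-Schwarz gives \<open>\<integral> g\<^sup>2 p i \<le> 2 Var\<^bsub>p i\<^esub> g \<le> 2 C \<E>\<^bsub>p i\<^esub> g\<close>. Summing with weights \<open>c i\<close>: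
  \<open>Var\<^bsub>p\<^sub>\<beta>\<^esub> g \<le> \<integral> g\<^sup>2 p\<^sub>\<beta> \<le> (\<Sum> c i \<integral> g\<^sup>2 p i) / wmin \<le> (2 C / wmin) \<Sum> c i \<E>\<^bsub>p i\<^esub> g \<le> (2 C / wmin) \<E>\<^bsub>p\<^sub>\<beta>\<^esub> g\<close>.\<close>

lemma square_le_of_quadratic_nonneg:
  fixes G X H :: real
  assumes quad: "\<And>t. 0 \<le> G - 2*t*X + t^2*H" and "0 \<le> H"
  shows "X^2 \<le> G * H"
proof (cases "H > 0")
  case True
  have "0 \<le> G - 2*(X/H)*X + (X/H)^2*H" by (rule quad)
  also have "\<dots> = G - X^2/H" using True by (simp add: field_simps power2_eq_square)
  finally show ?thesis using True by (simp add: field_simps)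
next
  case False
  with \<open>0 \<le> H\<close> have H: "H = 0" by simp
  show ?thesis
  proof (cases "X = 0")
    case False
    have "0 \<le> G - 2*((G+1)/(2*X))*X + ((G+1)/(2*X))^2*H" by (rule quad)
    also have "\<dots> = -1" using False H by (simp add: field_simps)
    finally show ?thesis by simp
  qed (use H in simp)
qed

lemma integral_weighted_Cauchy_Schwarz:
  fixes g h r :: "'a \<Rightarrow> real"
  assumes r_nn: "\<And>x. 0 \<le> r x"
    and [measurable]: "g \<in> borel_measurable M" "h \<in> borel_measurable M" "r \<in> borel_measurable M"
    and g_int: "integrable M (\<lambda>x. (g x)\<^sup>2 * r x)" and h_int: "integrable M (\<lambda>x. (h x)\<^sup>2 * r x)"
  shows "(\<integral>x. g x * h x * r x \<partial>M)\<^sup>2 \<le> (\<integral>x. (g x)\<^sup>2 * r x \<partial>M) * (\<integral>x. (h x)\<^sup>2 * r x \<partial>M)"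
proof (rule square_le_of_quadratic_nonneg)
  have gh_int: "integrable M (\<lambda>x. g x * h x * r x)"
  proof (rule Bochner_Integration.integrable_bound[OF Bochner_Integration.integrable_add[OF g_int h_int]])
    show "AE x in M. norm (g x * h x * r x) \<le> norm ((g x)\<^sup>2 * r x + (h x)\<^sup>2 * r x)"
    proof (intro AE_I2)
      fix x
      have "2 * \<bar>g x\<bar> * \<bar>h x\<bar> \<le> \<bar>g x\<bar>\<^sup>2 + \<bar>h x\<bar>\<^sup>2"
        by (rule sum_squares_bound)
      moreover have "0 \<le> \<bar>g x\<bar> * \<bar>h x\<bar>" by simp
      ultimately have "\<bar>g x * h x\<bar> \<le> (g x)\<^sup>2 + (h x)\<^sup>2"
        unfolding abs_mult power2_abs by linarith
      then have "\<bar>g x * h x\<bar> * r x \<le> ((g x)\<^sup>2 + (h x)\<^sup>2) * r x"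
        using r_nn[of x] by (rule mult_right_mono)
      then show "norm (g x * h x * r x) \<le> norm ((g x)\<^sup>2 * r x + (h x)\<^sup>2 * r x)"
        using r_nn[of x] by (simp add: abs_mult algebra_simps)
    qed
  qed measurable
  fix t :: real
  have "0 \<le> (\<integral>x. (g x - t * h x)\<^sup>2 * r x \<partial>M)"
    using r_nn by (intro integral_nonneg_AE) auto
  also have "(\<lambda>x. (g x - t * h x)\<^sup>2 * r x)
      = (\<lambda>x. (g x)\<^sup>2 * r x - 2*t*(g x * h x * r x) + t^2 * ((h x)\<^sup>2 * r x))"
    by (auto simp: power2_eq_square algebra_simps)
  also have "integral\<^sup>L M \<dots> = (\<integral>x. (g x)\<^sup>2 * r x \<partial>M) - 2*t*(\<integral>x. g x * h x * r x \<partial>M)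
      + t^2 * (\<integral>x. (h x)\<^sup>2 * r x \<partial>M)"
    using g_int gh_int h_int by simp
  finally show "0 \<le> \<dots>" .
next
  show "0 \<le> (\<integral>x. (h x)\<^sup>2 * r x \<partial>M)" using r_nn by (intro integral_nonneg_AE) auto
qed

lemma continuous_on_imp_borel_measurable_lebesgue:
  "continuous_on UNIV (h::'a::euclidean_space \<Rightarrow> real) \<Longrightarrow> h \<in> borel_measurable lebesgue"
  by (simp add: borel_measurable_continuous_onI measurable_completion)

lemma loc_lipschitz_imp_continuous_on:
  assumes "loc_lipschitz (g::'a::euclidean_space \<Rightarrow> real)"
  shows "continuous_on UNIV g"
proof -
  have "isCont g x" for x
  proof -
    obtain e L where e: "e > 0" and L: "\<forall>y\<in>ball x e. \<forall>z\<in>ball x e. \<bar>g y - g z\<bar> \<le> L * dist y z"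
      using assms unfolding loc_lipschitz_def by blast
    have "(max L 0)-lipschitz_on (ball x e) g"
      unfolding lipschitz_on_def
    proof (intro conjI ballI)
      fix y z assume "y \<in> ball x e" "z \<in> ball x e"
      then have "\<bar>g y - g z\<bar> \<le> L * dist y z" using L by blast
      also have "\<dots> \<le> max L 0 * dist y z" by (intro mult_right_mono) auto
      finally show "dist (g y) (g z) \<le> max L 0 * dist y z" by (simp add: dist_real_def)
    qed auto
    then have "continuous_on (ball x e) g" by (rule lipschitz_on_continuous_on)
    then show ?thesis using e by (simp add: continuous_on_eq_continuous_at)
  qed
  then show ?thesis by (simp add: continuous_at_imp_continuous_on)
qed

lemma admissible_imp_borel_measurable:
  "admissible p g \<Longrightarrow> g \<in> borel_measurable lebesgue"
  unfolding admissible_def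
  by (blast intro: continuous_on_imp_borel_measurable_lebesgue loc_lipschitz_imp_continuous_on)

lemma smooth_fun_imp_continuous_on:
  assumes "smooth_fun (f::'a::euclidean_space \<Rightarrow> real)"
  shows "continuous_on UNIV f"
proof -
  have "\<forall>x. f differentiable (at x)" using assms by (cases rule: smooth_fun.cases) auto
  then show ?thesis by (simp add: continuous_at_imp_continuous_on differentiable_imp_continuous_within)
qed

lemma integral_pos_lebesgue:
  fixes f :: "'a::euclidean_space \<Rightarrow> real"
  assumes f_int: "integrable lebesgue f" and f_pos: "\<And>x. 0 < f x"
  shows "0 < (\<integral>x. f x \<partial>lebesgue)"
proof -
  have "(\<integral>x. f x \<partial>lebesgue) \<noteq> 0"
  proof
    assume "(\<integral>x. f x \<partial>lebesgue) = 0"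
    then have "AE x in lebesgue. f x = 0"
      using integral_nonneg_eq_0_iff_AE[OF f_int] f_pos by (simp add: less_imp_le)
    \<comment> \<open>but a closed set containing almost every point is the whole space\<close>
    then have "AE x in lebesgue. x \<in> ({} :: 'a set)"
      by (rule AE_mp) (use f_pos in \<open>auto intro: AE_I2 simp: less_le\<close>)
    then show False using mem_closed_if_AE_lebesgue[of "{}"] by auto
  qed
  moreover have "0 \<le> (\<integral>x. f x \<partial>lebesgue)" using f_pos by (simp add: less_imp_le)
  ultimately show ?thesis by simp
qed

lemma variance_p_nonneg:
  fixes p g :: "'a::euclidean_space \<Rightarrow> real"
  assumes p_nn: "\<And>x. 0 \<le> p x" and p_int: "integrable lebesgue p"
    and p_one: "(\<integral>x. p x \<partial>lebesgue) = 1"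
    and g_meas: "g \<in> borel_measurable lebesgue"
    and g_int: "integrable lebesgue (\<lambda>x. (g x)\<^sup>2 * p x)"
  shows "0 \<le> variance_p p g"
proof -
  have "(\<integral>x. g x * 1 * p x \<partial>lebesgue)\<^sup>2 \<le> (\<integral>x. (g x)\<^sup>2 * p x \<partial>lebesgue) * (\<integral>x. 1\<^sup>2 * p x \<partial>lebesgue)"
    using p_nn p_int g_meas g_int by (intro integral_weighted_Cauchy_Schwarz) auto
  then show ?thesis unfolding variance_p_def using p_one by simp
qed

lemma poincare_small_sets_nonpos_const:
  fixes p :: "'a::euclidean_space \<Rightarrow> real"
  assumes "\<And>x. 0 \<le> p x" "integrable lebesgue p" "(\<integral>x. p x \<partial>lebesgue) = 1" "C \<le> 0"
  shows "poincare_small_sets p C m"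
  unfolding poincare_small_sets_def
proof (intro allI impI)
  fix g assume "admissible p g"
  then have "0 \<le> variance_p p g"
    using assms by (intro variance_p_nonneg admissible_imp_borel_measurable) (auto simp: admissible_def)
  then have "variance_p p g / C \<le> 0" using \<open>C \<le> 0\<close> by (simp add: divide_nonneg_nonpos)
  then show "ennreal (variance_p p g / C) \<le> dirichlet p g" by (simp add: ennreal_neg)
qed

lemma prob_dens_eq_integral:
  fixes p :: "'a::euclidean_space \<Rightarrow> real"
  assumes p_nn: "\<And>x. 0 \<le> p x" and p_int: "integrable lebesgue p" and A: "A \<in> sets lebesgue"
  shows "prob_dens p A = ennreal (\<integral>x. indicator A x * p x \<partial>lebesgue)"
proof -
  have "(\<lambda>x. ennreal (p x) * indicator A x) = (\<lambda>x. ennreal (indicator A x * p x))"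
    by (auto split: split_indicator)
  then show ?thesis
    unfolding prob_dens_def using integrable_mult_indicator[OF A p_int] p_nn
    by (simp add: nn_integral_eq_integral)
qed

lemma second_moment_le_twice_variance_p:
  fixes p g :: "'a::euclidean_space \<Rightarrow> real"
  assumes p_nn: "\<And>x. 0 \<le> p x" and p_int: "integrable lebesgue p"
    and g_meas: "g \<in> borel_measurable lebesgue"
    and g_int: "integrable lebesgue (\<lambda>x. (g x)\<^sup>2 * p x)"
    and A: "A \<in> sets lebesgue" and g_out: "\<And>x. x \<notin> A \<Longrightarrow> g x = 0"
    and A_small: "(\<integral>x. indicator A x * p x \<partial>lebesgue) \<le> 1/2"
  shows "(\<integral>x. (g x)\<^sup>2 * p x \<partial>lebesgue) \<le> 2 * variance_p p g"
proof -
  have gA: "g x * indicator A x = g x" for x using g_out[of x] by (auto split: split_indicator)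
  have ind_sq: "(indicator A x)\<^sup>2 = (indicator A x :: real)" for x
    by (simp split: split_indicator)
  have "(\<integral>x. g x * p x \<partial>lebesgue)\<^sup>2 = (\<integral>x. g x * indicator A x * p x \<partial>lebesgue)\<^sup>2"
    by (simp only: gA)
  also have "\<dots> \<le> (\<integral>x. (g x)\<^sup>2 * p x \<partial>lebesgue) * (\<integral>x. (indicator A x)\<^sup>2 * p x \<partial>lebesgue)"
    using p_nn p_int g_meas g_int integrable_mult_indicator[OF A p_int] A
    by (intro integral_weighted_Cauchy_Schwarz) (auto simp: ind_sq)
  also have "\<dots> \<le> (\<integral>x. (g x)\<^sup>2 * p x \<partial>lebesgue) * (1/2)"
    unfolding ind_sq using A_small p_nn by (intro mult_left_mono integral_nonneg_AE) auto
  finally show ?thesis unfolding variance_p_def by simp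
qed

text \<open>Unlike \<open>nn_integral_add\<close> and \<open>nn_integral_cmult\<close>, these need no measurability: the Dirichlet
  integrand contains \<open>grad g\<close>, which is defined by choice and need not be measurable.\<close>

lemma nn_integral_add_le:
  "integral\<^sup>N M f + integral\<^sup>N M g \<le> (\<integral>\<^sup>+x. f x + g x \<partial>M)"
proof -
  let ?F = "{s. simple_function M s \<and> s \<le> f}" and ?G = "{t. simple_function M t \<and> t \<le> g}"
  have ne: "?F \<noteq> {}" "?G \<noteq> {}" by (auto intro!: exI[of _ "\<lambda>_. 0"] simp: le_fun_def)
  have "integral\<^sup>N M f + integral\<^sup>N M g = (SUP s\<in>?F. integral\<^sup>S M s) + (SUP t\<in>?G. integral\<^sup>S M t)"
    unfolding nn_integral_def ..
  also have "\<dots> = (SUP s\<in>?F. integral\<^sup>S M s + (SUP t\<in>?G. integral\<^sup>S M t))"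
    using ennreal_SUP_add_left[OF ne(1)] by simp
  also have "\<dots> = (SUP s\<in>?F. SUP t\<in>?G. integral\<^sup>S M s + integral\<^sup>S M t)"
    using ennreal_SUP_add_right[OF ne(2)] by simp
  also have "\<dots> \<le> (\<integral>\<^sup>+x. f x + g x \<partial>M)"
  proof (intro SUP_least)
    fix s t assume s: "s \<in> ?F" and t: "t \<in> ?G"
    then have "integral\<^sup>S M s + integral\<^sup>S M t = (\<integral>\<^sup>+x. s x + t x \<partial>M)"
      by (simp add: nn_integral_eq_simple_integral)
    also have "\<dots> \<le> (\<integral>\<^sup>+x. f x + g x \<partial>M)"
      using s t by (intro nn_integral_mono) (auto simp: le_fun_def intro: add_mono)
    finally show "integral\<^sup>S M s + integral\<^sup>S M t \<le> (\<integral>\<^sup>+x. f x + g x \<partial>M)" .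
  qed
  finally show ?thesis .
qed

lemma nn_integral_cmult_le:
  "c * integral\<^sup>N M f \<le> (\<integral>\<^sup>+x. c * f x \<partial>M)"
proof -
  let ?F = "{s. simple_function M s \<and> s \<le> f}"
  have "c * integral\<^sup>N M f = (SUP s\<in>?F. c * integral\<^sup>S M s)"
    unfolding nn_integral_def by (simp add: SUP_mult_left_ennreal)
  also have "\<dots> \<le> (\<integral>\<^sup>+x. c * f x \<partial>M)"
  proof (intro SUP_least)
    fix s assume s: "s \<in> ?F"
    then have "c * integral\<^sup>S M s = (\<integral>\<^sup>+x. c * s x \<partial>M)"
      by (simp add: nn_integral_eq_simple_integral)
    also have "\<dots> \<le> (\<integral>\<^sup>+x. c * f x \<partial>M)"
      using s by (intro nn_integral_mono) (auto simp: le_fun_def intro: mult_left_mono)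
    finally show "c * integral\<^sup>S M s \<le> (\<integral>\<^sup>+x. c * f x \<partial>M)" .
  qed
  finally show ?thesis .
qed

lemma sum_nn_integral_le:
  "(\<Sum>i\<in>I. c i * integral\<^sup>N M (f i)) \<le> (\<integral>\<^sup>+x. (\<Sum>i\<in>I. c i * f i x) \<partial>M)"
proof (induction I rule: infinite_finite_induct)
  case (insert j I)
  have "(\<Sum>i\<in>insert j I. c i * integral\<^sup>N M (f i))
      = c j * integral\<^sup>N M (f j) + (\<Sum>i\<in>I. c i * integral\<^sup>N M (f i))"
    using insert by simp
  also have "\<dots> \<le> (\<integral>\<^sup>+x. c j * f j x \<partial>M) + (\<integral>\<^sup>+x. (\<Sum>i\<in>I. c i * f i x) \<partial>M)"
    using insert.IH nn_integral_cmult_le by (intro add_mono) auto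
  also have "\<dots> \<le> (\<integral>\<^sup>+x. c j * f j x + (\<Sum>i\<in>I. c i * f i x) \<partial>M)"
    by (rule nn_integral_add_le)
  also have "\<dots> = (\<integral>\<^sup>+x. (\<Sum>i\<in>insert j I. c i * f i x) \<partial>M)"
    using insert by simp
  finally show ?case .
qed simp_all

lemma sum_dirichlet_le:
  fixes p :: "'a::euclidean_space \<Rightarrow> real" and q :: "'i \<Rightarrow> 'a \<Rightarrow> real"
  assumes c_nn: "\<And>i. i \<in> I \<Longrightarrow> 0 \<le> c i" and q_nn: "\<And>i x. i \<in> I \<Longrightarrow> 0 \<le> q i x"
    and mix_le: "\<And>x. (\<Sum>i\<in>I. c i * q i x) \<le> p x"
  shows "(\<Sum>i\<in>I. ennreal (c i) * dirichlet (q i) g) \<le> dirichlet p g"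
proof -
  have "(\<Sum>i\<in>I. ennreal (c i) * dirichlet (q i) g)
      \<le> (\<integral>\<^sup>+x. (\<Sum>i\<in>I. ennreal (c i) * ennreal ((norm (grad g x))\<^sup>2 * q i x)) \<partial>lebesgue)"
    unfolding dirichlet_def by (rule sum_nn_integral_le)
  also have "\<dots> \<le> dirichlet p g"
    unfolding dirichlet_def
  proof (rule nn_integral_mono)
    fix x
    have "(\<Sum>i\<in>I. ennreal (c i) * ennreal ((norm (grad g x))\<^sup>2 * q i x))
        = ennreal (\<Sum>i\<in>I. c i * ((norm (grad g x))\<^sup>2 * q i x))"
      using c_nn q_nn by (simp add: sum_ennreal ennreal_mult'[symmetric])
    also have "(\<Sum>i\<in>I. c i * ((norm (grad g x))\<^sup>2 * q i x)) = (norm (grad g x))\<^sup>2 * (\<Sum>i\<in>I. c i * q i x)"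
      by (simp add: sum_distrib_left mult_ac)
    also have "\<dots> \<le> (norm (grad g x))\<^sup>2 * p x"
      using mix_le by (intro mult_left_mono) auto
    finally show "(\<Sum>i\<in>I. ennreal (c i) * ennreal ((norm (grad g x))\<^sup>2 * q i x))
        \<le> ennreal ((norm (grad g x))\<^sup>2 * p x)"
      by (simp add: ennreal_leI)
  qed
  finally show ?thesis .
qed

lemma second_moment_le_dirichlet:
  fixes p g :: "'a::euclidean_space \<Rightarrow> real"
  assumes poinc: "poincare p C" and C: "0 < C"
    and p_nn: "\<And>x. 0 \<le> p x" and p_int: "integrable lebesgue p" and adm: "admissible p g"
    and small: "prob_dens p (supp g) \<le> ennreal (1/2)"
  shows "ennreal ((\<integral>x. (g x)\<^sup>2 * p x \<partial>lebesgue) / (2 * C)) \<le> dirichlet p g"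
proof -
  have A: "supp g \<in> sets lebesgue"
    unfolding supp_def by (metis closed_closure borel_closed sets_lborel sets_completionI_sets)
  have g_out: "g x = 0" if "x \<notin> supp g" for x
    using that closure_subset[of "{x. g x \<noteq> 0}"] unfolding supp_def by auto
  have "ennreal (\<integral>x. indicator (supp g) x * p x \<partial>lebesgue) \<le> ennreal (1/2)"
    using small prob_dens_eq_integral[OF p_nn p_int A] by (simp only:)
  then have "(\<integral>x. indicator (supp g) x * p x \<partial>lebesgue) \<le> 1/2"
    by (subst (asm) ennreal_le_iff) auto
  then have "(\<integral>x. (g x)\<^sup>2 * p x \<partial>lebesgue) \<le> 2 * variance_p p g"
    using adm p_nn p_int A g_out
    by (intro second_moment_le_twice_variance_p admissible_imp_borel_measurable)
      (auto simp: admissible_def)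
  then have "(\<integral>x. (g x)\<^sup>2 * p x \<partial>lebesgue) / (2 * C) \<le> variance_p p g / C"
    using C by (simp add: field_simps)
  then have "ennreal ((\<integral>x. (g x)\<^sup>2 * p x \<partial>lebesgue) / (2 * C)) \<le> ennreal (variance_p p g / C)"
    by (rule ennreal_leI)
  also have "\<dots> \<le> dirichlet p g" using poinc adm unfolding poincare_def by blast
  finally show ?thesis .
qed

lemma admissible_dominated:
  fixes p q g :: "'a::euclidean_space \<Rightarrow> real"
  assumes adm: "admissible p g" and q_meas: "q \<in> borel_measurable lebesgue"
    and q_nn: "\<And>x. 0 \<le> q x" and c: "0 < c" and dom: "\<And>x. c * q x \<le> p x"
  shows "admissible q g"
  unfolding admissible_def
proof
  show "loc_lipschitz g" using adm by (simp add: admissible_def)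
  have g2p_int: "integrable lebesgue (\<lambda>x. (g x)\<^sup>2 * p x)" using adm by (simp add: admissible_def)
  show "integrable lebesgue (\<lambda>x. (g x)\<^sup>2 * q x)"
  proof (rule Bochner_Integration.integrable_bound[OF integrable_divide[OF g2p_int, of c]])
    show "(\<lambda>x. (g x)\<^sup>2 * q x) \<in> borel_measurable lebesgue"
      using admissible_imp_borel_measurable[OF adm] q_meas by measurable
    show "AE x in lebesgue. norm ((g x)\<^sup>2 * q x) \<le> norm ((g x)\<^sup>2 * p x / c)"
    proof (intro AE_I2)
      fix x
      have "q x \<le> p x / c" using dom[of x] c by (simp add: field_simps)
      then have "(g x)\<^sup>2 * q x \<le> (g x)\<^sup>2 * p x / c"
        using mult_left_mono[of "q x" "p x / c" "(g x)\<^sup>2"] by simp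
      moreover have "0 \<le> (g x)\<^sup>2 * q x" using q_nn[of x] by simp
      ultimately show "norm ((g x)\<^sup>2 * q x) \<le> norm ((g x)\<^sup>2 * p x / c)"
        by (metis abs_ge_self abs_of_nonneg order_trans real_norm_def)
    qed
  qed
qed

lemma prob_dens_dominated:
  fixes p q :: "'a::euclidean_space \<Rightarrow> real"
  assumes c: "0 \<le> c" and q_nn: "\<And>x. 0 \<le> q x" and dom: "\<And>x. c * q x \<le> p x"
  shows "ennreal c * prob_dens q A \<le> prob_dens p A"
proof -
  have "ennreal c * prob_dens q A \<le> (\<integral>\<^sup>+x. ennreal c * (ennreal (q x) * indicator A x) \<partial>lebesgue)"
    unfolding prob_dens_def by (rule nn_integral_cmult_le)
  also have "\<dots> \<le> prob_dens p A"
    unfolding prob_dens_def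
  proof (intro nn_integral_mono)
    fix x
    have "ennreal c * ennreal (q x) \<le> ennreal (p x)"
      using dom[of x] c q_nn[of x] by (simp add: ennreal_leI flip: ennreal_mult)
    then show "ennreal c * (ennreal (q x) * indicator A x) \<le> ennreal (p x) * indicator A x"
      by (auto split: split_indicator)
  qed
  finally show ?thesis .
qed

lemma variance_p_le_mixture_second_moments:
  fixes p g :: "'a::euclidean_space \<Rightarrow> real" and q :: "'i \<Rightarrow> 'a \<Rightarrow> real"
  assumes g2p_int: "integrable lebesgue (\<lambda>x. (g x)\<^sup>2 * p x)"
    and g2q_int: "\<And>i. i \<in> I \<Longrightarrow> integrable lebesgue (\<lambda>x. (g x)\<^sup>2 * q i x)"
    and le_mix: "\<And>x. p x \<le> K * (\<Sum>i\<in>I. c i * q i x)"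
  shows "variance_p p g \<le> K * (\<Sum>i\<in>I. c i * (\<integral>x. (g x)\<^sup>2 * q i x \<partial>lebesgue))"
proof -
  have "variance_p p g \<le> (\<integral>x. (g x)\<^sup>2 * p x \<partial>lebesgue)"
    unfolding variance_p_def by simp
  also have "\<dots> \<le> (\<integral>x. K * (\<Sum>i\<in>I. c i * ((g x)\<^sup>2 * q i x)) \<partial>lebesgue)"
  proof (rule integral_mono)
    show "integrable lebesgue (\<lambda>x. K * (\<Sum>i\<in>I. c i * ((g x)\<^sup>2 * q i x)))"
      using g2q_int by simp
    fix x
    have "(g x)\<^sup>2 * p x \<le> (g x)\<^sup>2 * (K * (\<Sum>i\<in>I. c i * q i x))"
      using le_mix by (rule mult_left_mono) simp
    also have "\<dots> = K * (\<Sum>i\<in>I. c i * ((g x)\<^sup>2 * q i x))"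
      by (simp add: sum_distrib_left mult_ac)
    finally show "(g x)\<^sup>2 * p x \<le> K * (\<Sum>i\<in>I. c i * ((g x)\<^sup>2 * q i x))" .
  qed (rule g2p_int)
  also have "\<dots> = K * (\<Sum>i\<in>I. c i * (\<integral>x. (g x)\<^sup>2 * q i x \<partial>lebesgue))"
    using g2q_int by simp
  finally show ?thesis .
qed

lemma poincare_small_sets_of_mixture:
  fixes p :: "'a::euclidean_space \<Rightarrow> real" and q :: "'i \<Rightarrow> 'a \<Rightarrow> real" and c :: "'i \<Rightarrow> real"
  assumes I: "finite I"
    and p_int: "integrable lebesgue p"
    and q_int: "\<And>i. i \<in> I \<Longrightarrow> integrable lebesgue (q i)"
    and q_nn: "\<And>i x. i \<in> I \<Longrightarrow> 0 \<le> q i x"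
    and q_poinc: "\<And>i. i \<in> I \<Longrightarrow> poincare (q i) C"
    and C: "0 < C" and K: "0 < K" and m: "0 \<le> m"
    and c_pos: "\<And>i. i \<in> I \<Longrightarrow> 0 < c i"
    and c_ge: "\<And>i. i \<in> I \<Longrightarrow> 2 * m \<le> c i"
    and mix_le: "\<And>x. (\<Sum>i\<in>I. c i * q i x) \<le> p x"
    and le_mix: "\<And>x. p x \<le> K * (\<Sum>i\<in>I. c i * q i x)"
  shows "poincare_small_sets p (2 * C * K) m"
  unfolding poincare_small_sets_def
proof (intro allI impI)
  fix g assume adm: "admissible p g" and small: "prob_dens p (supp g) \<le> ennreal m"
  have c_nn: "\<And>i. i \<in> I \<Longrightarrow> 0 \<le> c i" using c_pos by (simp add: less_imp_le)
  have dom: "c i * q i x \<le> p x" if "i \<in> I" for i x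
    using member_le_sum[of i I "\<lambda>j. c j * q j x"] that I c_nn q_nn mix_le[of x] by force
  have adm_q: "admissible (q i) g" if i: "i \<in> I" for i
    using adm borel_measurable_integrable[OF q_int[OF i]] q_nn[OF i] c_pos[OF i] dom[OF i]
    by (rule admissible_dominated)
  have small_q: "prob_dens (q i) (supp g) \<le> ennreal (1/2)" if i: "i \<in> I" for i
  proof -
    have "ennreal (c i) * prob_dens (q i) (supp g) \<le> ennreal m"
      using prob_dens_dominated[OF c_nn[OF i] q_nn[OF i] dom[OF i]] small by (rule order_trans)
    also have "\<dots> \<le> ennreal (c i * (1/2))"
      using c_ge[OF i] by (intro ennreal_leI) simp
    also have "\<dots> = ennreal (c i) * ennreal (1/2)"
      using c_nn[OF i] by (rule ennreal_mult')
    finally show ?thesis using c_pos[OF i] by (simp add: ennreal_mult_le_mult_iff)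
  qed
  have g2p_int: "integrable lebesgue (\<lambda>x. (g x)\<^sup>2 * p x)" using adm by (simp add: admissible_def)
  have g2q_int: "integrable lebesgue (\<lambda>x. (g x)\<^sup>2 * q i x)" if "i \<in> I" for i
    using adm_q[OF that] by (simp add: admissible_def)
  define M where "M i = (\<integral>x. (g x)\<^sup>2 * q i x \<partial>lebesgue)" for i
  have M_nn: "0 \<le> M i" if "i \<in> I" for i
    unfolding M_def using q_nn[OF that] by (intro integral_nonneg_AE) auto
  have M_le: "ennreal (M i / (2 * C)) \<le> dirichlet (q i) g" if i: "i \<in> I" for i
    unfolding M_def using q_poinc[OF i] C q_nn[OF i] q_int[OF i] adm_q[OF i] small_q[OF i]
    by (rule second_moment_le_dirichlet)
  have "variance_p p g \<le> K * (\<Sum>i\<in>I. c i * M i)"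
    unfolding M_def using g2p_int g2q_int le_mix by (rule variance_p_le_mixture_second_moments)
  then have "variance_p p g / (2 * C * K) \<le> (\<Sum>i\<in>I. c i * M i) / (2 * C)"
    using C K by (simp add: field_simps)
  also have "\<dots> = (\<Sum>i\<in>I. c i * (M i / (2 * C)))"
    by (simp add: sum_divide_distrib)
  finally have "ennreal (variance_p p g / (2 * C * K)) \<le> ennreal (\<Sum>i\<in>I. c i * (M i / (2 * C)))"
    by (rule ennreal_leI)
  also have "\<dots> = (\<Sum>i\<in>I. ennreal (c i * (M i / (2 * C))))"
    using c_nn M_nn C by (intro sum_ennreal[symmetric]) auto
  also have "\<dots> = (\<Sum>i\<in>I. ennreal (c i) * ennreal (M i / (2 * C)))"
    using c_nn by (intro sum.cong refl ennreal_mult') auto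
  also have "\<dots> \<le> (\<Sum>i\<in>I. ennreal (c i) * dirichlet (q i) g)"
    using M_le by (intro sum_mono mult_left_mono) auto
  also have "\<dots> \<le> dirichlet p g"
    using c_nn q_nn mix_le by (rule sum_dirichlet_le)
  finally show "ennreal (variance_p p g / (2 * C * K)) \<le> dirichlet p g" .
qed

lemma sum_weighted_powr_le_powr_sum:
  fixes a w :: "'i \<Rightarrow> real"
  assumes a: "\<And>i. i \<in> I \<Longrightarrow> 0 < a i" and w: "\<And>i. i \<in> I \<Longrightarrow> 0 < w i"
    and w_sum: "(\<Sum>i\<in>I. w i) = 1" and \<beta>: "0 < \<beta>" "\<beta> \<le> 1"
  shows "(\<Sum>i\<in>I. w i * a i powr \<beta>) \<le> (\<Sum>i\<in>I. w i * a i) powr \<beta>"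
proof -
  define S where "S = (\<Sum>i\<in>I. w i * a i)"
  have I: "finite I" "I \<noteq> {}" using w_sum by (auto intro: ccontr)
  have S: "0 < S" unfolding S_def using I a w by (intro sum_pos) auto
  have tangent: "a i powr \<beta> \<le> S powr \<beta> * (\<beta> * (a i / S) + (1 - \<beta>))" if i: "i \<in> I" for i
  proof -
    have "(a i / S) powr \<beta> * 1 powr (1 - \<beta>) \<le> \<beta> * (a i / S) + (1 - \<beta>) * 1"
      using \<beta> a[OF i] S by (intro Youngs_inequality_0) auto
    moreover have "(a i / S) powr \<beta> = a i powr \<beta> / S powr \<beta>"
      using a[OF i] S by (simp add: powr_divide)
    ultimately show ?thesis using S by (simp add: field_simps)
  qed
  have "(\<Sum>i\<in>I. w i * a i powr \<beta>) \<le> (\<Sum>i\<in>I. w i * (S powr \<beta> * (\<beta> * (a i / S) + (1 - \<beta>))))"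
    using w tangent by (intro sum_mono mult_left_mono) (auto intro: less_imp_le)
  also have "\<dots> = (\<Sum>i\<in>I. (S powr \<beta> * \<beta> / S) * (w i * a i) + S powr \<beta> * (1 - \<beta>) * w i)"
    by (intro sum.cong) (auto simp: field_simps)
  also have "\<dots> = (S powr \<beta> * \<beta> / S) * (\<Sum>i\<in>I. w i * a i) + S powr \<beta> * (1 - \<beta>) * (\<Sum>i\<in>I. w i)"
    by (simp add: sum.distrib sum_distrib_left)
  also have "\<dots> = S powr \<beta>" using S w_sum unfolding S_def[symmetric] by (simp add: field_simps)
  finally show ?thesis unfolding S_def .
qed

lemma powr_sum_weighted_le_sum_weighted_powr:
  fixes a w :: "'i \<Rightarrow> real"
  assumes a: "\<And>i. i \<in> I \<Longrightarrow> 0 < a i" and w: "\<And>i. i \<in> I \<Longrightarrow> 0 < w i"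
    and w_sum: "(\<Sum>i\<in>I. w i) = 1" and \<beta>: "0 < \<beta>"
    and wmin: "0 < wmin" "\<And>i. i \<in> I \<Longrightarrow> wmin \<le> w i"
  shows "(\<Sum>i\<in>I. w i * a i) powr \<beta> \<le> (\<Sum>i\<in>I. w i * a i powr \<beta>) / wmin"
proof -
  define S where "S = (\<Sum>i\<in>I. w i * a i)"
  have I: "finite I" "I \<noteq> {}" using w_sum by (auto intro: ccontr)
  have S: "0 < S" unfolding S_def using I a w by (intro sum_pos) auto
  have "\<exists>j\<in>I. S \<le> a j"
  proof (rule ccontr)
    assume "\<not> ?thesis"
    then have "S < (\<Sum>i\<in>I. w i * S)"
      unfolding S_def using I w by (intro sum_strict_mono) (auto simp: S_def not_le)
    also have "\<dots> = S" using w_sum by (simp flip: sum_distrib_right)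
    finally show False by simp
  qed
  then obtain j where j: "j \<in> I" "S \<le> a j" by blast
  have "S powr \<beta> \<le> a j powr \<beta>" using j S \<beta> by (intro powr_mono2) auto
  also have "\<dots> \<le> w j * a j powr \<beta> / wmin"
    using wmin j w[of j] by (simp add: field_simps mult_right_mono)
  also have "\<dots> \<le> (\<Sum>i\<in>I. w i * a i powr \<beta>) / wmin"
    using I j w wmin by (intro divide_right_mono member_le_sum) (auto simp: less_imp_le)
  finally show ?thesis unfolding S_def .
qed

lemma tempered_mixture_bounds:
  fixes f w :: "'i \<Rightarrow> real"
  assumes w: "\<And>i. i \<in> I \<Longrightarrow> 0 < w i" and w_sum: "(\<Sum>i\<in>I. w i) = 1"
    and \<beta>: "0 < \<beta>" "\<beta> \<le> 1" and wmin: "0 < wmin" "\<And>i. i \<in> I \<Longrightarrow> wmin \<le> w i"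
  shows "(\<Sum>i\<in>I. w i * exp (- \<beta> * f i)) \<le> exp (- \<beta> * - ln (\<Sum>i\<in>I. w i * exp (- f i)))"
    and "exp (- \<beta> * - ln (\<Sum>i\<in>I. w i * exp (- f i))) \<le> (\<Sum>i\<in>I. w i * exp (- \<beta> * f i)) / wmin"
proof -
  have I: "finite I" "I \<noteq> {}" using w_sum by (auto intro: ccontr)
  have "0 < (\<Sum>i\<in>I. w i * exp (- f i))" using I w by (intro sum_pos) auto
  then have mixture: "exp (- \<beta> * - ln (\<Sum>i\<in>I. w i * exp (- f i))) = (\<Sum>i\<in>I. w i * exp (- f i)) powr \<beta>"
    by (simp add: powr_def)
  have component: "exp (- \<beta> * f i) = exp (- f i) powr \<beta>" for i
    by (simp add: powr_def)
  show "(\<Sum>i\<in>I. w i * exp (- \<beta> * f i)) \<le> exp (- \<beta> * - ln (\<Sum>i\<in>I. w i * exp (- f i)))"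
    unfolding mixture component using w w_sum \<beta> by (intro sum_weighted_powr_le_powr_sum) auto
  show "exp (- \<beta> * - ln (\<Sum>i\<in>I. w i * exp (- f i))) \<le> (\<Sum>i\<in>I. w i * exp (- \<beta> * f i)) / wmin"
    unfolding mixture component using w w_sum \<beta> wmin
    by (intro powr_sum_weighted_le_sum_weighted_powr) auto
qed

lemma integral_bounds_of_sandwich:
  fixes P Q :: "'a \<Rightarrow> real"
  assumes Q_int: "integrable M Q" and P_meas: "P \<in> borel_measurable M"
    and Q_nn: "\<And>x. 0 \<le> Q x" and k: "0 < k"
    and lower: "\<And>x. Q x \<le> P x" and upper: "\<And>x. P x \<le> Q x / k"
  shows "integrable M P" and "(\<integral>x. Q x \<partial>M) \<le> (\<integral>x. P x \<partial>M)"
    and "(\<integral>x. P x \<partial>M) \<le> (\<integral>x. Q x \<partial>M) / k"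
proof -
  show P_int: "integrable M P"
  proof (rule Bochner_Integration.integrable_bound[OF integrable_divide[OF Q_int, of k] P_meas])
    show "AE x in M. norm (P x) \<le> norm (Q x / k)"
    proof (intro AE_I2)
      fix x
      have "0 \<le> P x" using Q_nn[of x] lower[of x] by linarith
      then show "norm (P x) \<le> norm (Q x / k)" using upper[of x] Q_nn[of x] k by simp
    qed
  qed
  show "(\<integral>x. Q x \<partial>M) \<le> (\<integral>x. P x \<partial>M)" using Q_int P_int lower by (rule integral_mono)
  have "(\<integral>x. P x \<partial>M) \<le> (\<integral>x. Q x / k \<partial>M)" using P_int Q_int upper by (intro integral_mono) auto
  then show "(\<integral>x. P x \<partial>M) \<le> (\<integral>x. Q x \<partial>M) / k" by simp
qed

lemma poincare_small_sets_of_sandwiched_mixture: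
  fixes q :: "'i \<Rightarrow> 'a::euclidean_space \<Rightarrow> real" and P :: "'a \<Rightarrow> real" and w :: "'i \<Rightarrow> real"
  assumes I: "finite I"
    and q_int: "\<And>i. i \<in> I \<Longrightarrow> integrable lebesgue (q i)"
    and q_nn: "\<And>i x. i \<in> I \<Longrightarrow> 0 \<le> q i x"
    and q_Z: "\<And>i. i \<in> I \<Longrightarrow> (\<integral>x. q i x \<partial>lebesgue) = Z" and Z: "0 < Z"
    and q_poinc: "\<And>i. i \<in> I \<Longrightarrow> poincare (\<lambda>x. q i x / Z) C"
    and w_pos: "\<And>i. i \<in> I \<Longrightarrow> 0 < w i" and w_sum: "(\<Sum>i\<in>I. w i) = 1"
    and wmin: "0 < wmin" "\<And>i. i \<in> I \<Longrightarrow> wmin \<le> w i"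
    and P_meas: "P \<in> borel_measurable lebesgue"
    and mix_le: "\<And>x. (\<Sum>i\<in>I. w i * q i x) \<le> P x"
    and le_mix: "\<And>x. P x \<le> (\<Sum>i\<in>I. w i * q i x) / wmin"
  shows "poincare_small_sets (\<lambda>x. P x / (\<integral>y. P y \<partial>lebesgue)) (2 * C / wmin) (wmin\<^sup>2 / 2)"
proof -
  define ZP where "ZP = (\<integral>y. P y \<partial>lebesgue)"
  have mix_int: "integrable lebesgue (\<lambda>x. \<Sum>i\<in>I. w i * q i x)" using q_int by simp
  have mix_Z: "(\<integral>x. (\<Sum>i\<in>I. w i * q i x) \<partial>lebesgue) = Z"
    using q_int q_Z w_sum by (simp flip: sum_distrib_right)
  have mix_nn: "0 \<le> (\<Sum>i\<in>I. w i * q i x)" for x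
    using w_pos q_nn by (intro sum_nonneg mult_nonneg_nonneg) (auto simp: less_imp_le)
  have P_nn: "0 \<le> P x" for x using mix_le[of x] mix_nn[of x] by linarith
  note ZP_bounds = integral_bounds_of_sandwich[OF mix_int P_meas mix_nn wmin(1) mix_le le_mix,
      unfolded mix_Z ZP_def[symmetric]]
  have ZP: "0 < ZP" using ZP_bounds(2) Z by simp
  have wmin_le: "wmin \<le> Z / ZP" using ZP_bounds(3) ZP wmin(1) by (simp add: field_simps)
  have p: "\<And>x. 0 \<le> P x / ZP" "integrable lebesgue (\<lambda>x. P x / ZP)" "(\<integral>x. P x / ZP \<partial>lebesgue) = 1"
    using P_nn ZP_bounds(1) ZP unfolding ZP_def by auto
  show ?thesis
  proof (cases "0 < C")
    case False
    then show ?thesis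
      using p wmin(1) unfolding ZP_def
      by (intro poincare_small_sets_nonpos_const) (auto simp: divide_nonpos_pos)
  next
    case True
    have "poincare_small_sets (\<lambda>x. P x / ZP) (2 * C * (1 / wmin)) (wmin\<^sup>2 / 2)"
    proof (rule poincare_small_sets_of_mixture[where q = "\<lambda>i x. q i x / Z" and c = "\<lambda>i. w i * Z / ZP"])
      fix i assume i: "i \<in> I"
      show "2 * (wmin\<^sup>2 / 2) \<le> w i * Z / ZP"
        using mult_mono[OF wmin(2)[OF i] wmin_le] less_imp_le[OF w_pos[OF i]] wmin(1)
        by (simp add: power2_eq_square)
    next
      fix x
      have mix: "(\<Sum>i\<in>I. w i * Z / ZP * (q i x / Z)) = (\<Sum>i\<in>I. w i * q i x) / ZP"
        using Z by (simp add: sum_divide_distrib)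
      show "(\<Sum>i\<in>I. w i * Z / ZP * (q i x / Z)) \<le> P x / ZP"
        unfolding mix using divide_right_mono[OF mix_le less_imp_le[OF ZP]] .
      show "P x / ZP \<le> 1 / wmin * (\<Sum>i\<in>I. w i * Z / ZP * (q i x / Z))"
        unfolding mix using divide_right_mono[OF le_mix less_imp_le[OF ZP]] by simp
    qed (use I p q_int q_nn q_poinc True wmin(1) w_pos Z ZP in auto)
    then show ?thesis unfolding ZP_def by simp
  qed
qed

theorem mainTheorem8:
  fixes n :: nat
    and fs :: "nat \<Rightarrow> 'a::euclidean_space \<Rightarrow> real"
    and w :: "nat \<Rightarrow> real"
    and \<beta> Z C :: real
  assumes n_pos: "n \<ge> 1"
    and smooth: "\<And>i. i < n \<Longrightarrow> smooth_fun (fs i)"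
    and dens_int: "\<And>i. i < n \<Longrightarrow> integrable lebesgue (\<lambda>x. exp (- fs i x))"
    and dens_one: "\<And>i. i < n \<Longrightarrow> (\<integral>x. exp (- fs i x) \<partial>lebesgue) = 1"
    and all_beta: "\<And>i b. i < n \<Longrightarrow> b > 0 \<Longrightarrow> integrable lebesgue (\<lambda>x. exp (- b * fs i x))"
    and w_pos: "\<And>i. i < n \<Longrightarrow> w i > 0"
    and w_sum: "(\<Sum>i<n. w i) = 1"
    and beta: "0 < \<beta>" "\<beta> \<le> 1"
    and Z_eq: "\<And>i. i < n \<Longrightarrow> (\<integral>x. exp (- \<beta> * fs i x) \<partial>lebesgue) = Z"
    and poinc: "\<And>i. i < n \<Longrightarrow> poincare (\<lambda>x. exp (- \<beta> * fs i x) / Z) C"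
  shows "let wmin = Min (w ` {..<n});
             f = (\<lambda>x. - ln (\<Sum>i<n. w i * exp (- fs i x)));
             p = (\<lambda>x. exp (- \<beta> * f x) / (\<integral>y. exp (- \<beta> * f y) \<partial>lebesgue))
         in poincare_small_sets p (2 * C / wmin) (wmin\<^sup>2 / 2)"
proof -
  define wmin where "wmin = Min (w ` {..<n})"
  define F where "F = (\<lambda>x. - ln (\<Sum>i<n. w i * exp (- fs i x)))"
  have wmin_in: "wmin \<in> w ` {..<n}"
    unfolding wmin_def using n_pos by (intro Min_in) (auto simp: lessThan_empty_iff)
  have wmin: "0 < wmin" "\<And>i. i < n \<Longrightarrow> wmin \<le> w i"
    using wmin_in w_pos unfolding wmin_def by auto
  have Z: "0 < Z"
    using integral_pos_lebesgue[OF all_beta[OF _ beta(1)]] Z_eq n_pos by force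
  have lower: "(\<Sum>i<n. w i * exp (- \<beta> * fs i x)) \<le> exp (- \<beta> * F x)" for x
    unfolding F_def using w_pos w_sum beta wmin
    by (intro tempered_mixture_bounds(1)[where wmin = wmin]) auto
  have upper: "exp (- \<beta> * F x) \<le> (\<Sum>i<n. w i * exp (- \<beta> * fs i x)) / wmin" for x
    unfolding F_def using w_pos w_sum beta wmin
    by (intro tempered_mixture_bounds(2)[where wmin = wmin]) auto
  have mix_pos: "0 < (\<Sum>i<n. w i * exp (- fs i x))" for x
    using n_pos w_pos by (intro sum_pos) (auto simp: lessThan_empty_iff)
  have "continuous_on UNIV (\<lambda>x. exp (- \<beta> * F x))"
    unfolding F_def using smooth_fun_imp_continuous_on[OF smooth] mix_pos
    by (auto intro!: continuous_intros simp: less_imp_neq[symmetric])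
  then have "poincare_small_sets (\<lambda>x. exp (- \<beta> * F x) / (\<integral>y. exp (- \<beta> * F y) \<partial>lebesgue))
      (2 * C / wmin) (wmin\<^sup>2 / 2)"
    by (intro poincare_small_sets_of_sandwiched_mixture[OF _ all_beta _ Z_eq Z poinc w_pos w_sum wmin
          continuous_on_imp_borel_measurable_lebesgue lower upper])
      (use beta in auto)
  then show ?thesis unfolding Let_def wmin_def F_def .
qed

end
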